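(* In the setting described in the context, fix $1\le n_1\le n_0$. Then for $1\le j\le n_0$, $I\in\mathcal I(n_1,n)$, $J\in\mathcal I(n_1,n_0)$ and $x\in B_{(X,d)}(x_0,\xi)$, $$\left|X_j\det X(x)_{I,J}\right|\lesssim\left|\det_{n_1\times n_1}X(x)\right|.$$
   Context: Setting: $\Omega\subseteq\mathbb R^n$ connected open; $X_1,\dots,X_{n_0}$ $C^1$ vector fields on $\Omega$ with degrees $d_j\in(0,\infty)$; $\xi\in(0,1]$, $x_0\in\Omega$, $(X,d)$ satisfies $\mathcal C(x_0,\xi)$; on $B=B_{(X,d)}(x_0,\xi)$, $[X_j,X_k]=\sum_{l=1}^{n_0}c^l_{j,k}X_l$; $X_1(x_0),\dots,X_{n_0}(x_0)$ linearly independent; $\|X_j\|_{C^1(B)}<\infty$; $\sum_{|\alpha|\le2}\|X^\alpha c^l_{j,k}\|_{C^0(B)}<\infty$ (derivatives continuous). $B_{(X,d)}(x_0,\xi)$ is the set of $\gamma(1)$ over paths $\gamma:[0,1]\to\Omega$, $\gamma(t)=x_0+\int_0^t\sum a_j\xi^{d_j}X_j(\gamma)$, $a\in L^\infty$, $\|(\sum|a_j|^2)^{1/2}\|_\infty<1$; $\mathcal C(x_0,\xi)$ means all such paths exist in $\Omega$. $X(x)$ is the $n\times n_0$ matrix with columns $X_j(x)$; $\mathcal I(m,N)$ is the set of increasing $m$-tuples from $\{1,\dots,N\}$; $M_{I,J}$ the submatrix with rows $I$ and columns $J$; $\det_{m\times m}M$ the vector of all $\det M_{I,J}$ and $|\cdot|$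 its Euclidean norm. Admissible constants depend only on upper/positive lower bounds for the $d_j$, an upper bound for $n$, a positive lower bound for $\xi$, and upper bounds for $\|X_j\|_{C^1(B)}$ and $\sum_{|\alpha|\le2}\|X^\alpha c^l_{j,k}\|_{C^0(B)}$; $\lesssim$ is up to admissible constants. *)

theory Defs
  imports "HOL-Analysis.Analysis"
begin

text \<open>Points of R^n are elements of real^'n; the coordinate index type 'n carries a
linear order so that "increasing tuples" of row indices make sense.
Vector fields are indexed 0..n0-1 (the paper's X_1..X_{n0}).\<close>

definition admissible_control :: "nat \<Rightarrow> (nat \<Rightarrow> real \<Rightarrow> real) \<Rightarrow> bool" where
  "admissible_control n0 a \<longleftrightarrow>
     (\<forall>j<n0. a j \<in> borel_measurable (lebesgue_on {0..1})) \<and>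
     (\<exists>r<1. AE s in lebesgue_on {0..1}. sqrt (\<Sum>j<n0. (a j s)\<^sup>2) \<le> r)"

definition control_path ::
  "(real^'n::finite) set \<Rightarrow> (nat \<Rightarrow> real^'n \<Rightarrow> real^'n) \<Rightarrow> (nat \<Rightarrow> real) \<Rightarrow> nat
     \<Rightarrow> real^'n \<Rightarrow> real \<Rightarrow> (nat \<Rightarrow> real \<Rightarrow> real) \<Rightarrow> (real \<Rightarrow> real^'n) \<Rightarrow> bool" where
  "control_path \<Omega> X d n0 x0 \<xi> a \<gamma> \<longleftrightarrow>
     (\<forall>t\<in>{0..1}. \<gamma> t \<in> \<Omega> \<and>
        ((\<lambda>s. \<Sum>j<n0. (a j s * \<xi> powr d j) *\<^sub>R X j (\<gamma> s)) has_integral (\<gamma> t - x0)) {0..t})"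

definition cc_ball ::
  "(real^'n::finite) set \<Rightarrow> (nat \<Rightarrow> real^'n \<Rightarrow> real^'n) \<Rightarrow> (nat \<Rightarrow> real) \<Rightarrow> nat
     \<Rightarrow> real^'n \<Rightarrow> real \<Rightarrow> (real^'n) set" where
  "cc_ball \<Omega> X d n0 x0 \<xi> =
     {\<gamma> 1 | \<gamma> a. admissible_control n0 a \<and> control_path \<Omega> X d n0 x0 \<xi> a \<gamma>}"

definition cond_C ::
  "(real^'n::finite) set \<Rightarrow> (nat \<Rightarrow> real^'n \<Rightarrow> real^'n) \<Rightarrow> (nat \<Rightarrow> real) \<Rightarrow> nat
     \<Rightarrow> real^'n \<Rightarrow> real \<Rightarrow> bool" where
  "cond_C \<Omega> X d n0 x0 \<xi> \<longleftrightarrow>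
     (\<forall>a. admissible_control n0 a \<longrightarrow> (\<exists>\<gamma>. control_path \<Omega> X d n0 x0 \<xi> a \<gamma>))"

text \<open>g = V f on S, where V f is the derivative of f along integral curves of V
(staying in S); this makes sense for functions only defined on S.\<close>
definition has_lie_deriv_on ::
  "(real^'n \<Rightarrow> real^'n) \<Rightarrow> (real^'n \<Rightarrow> real) \<Rightarrow> (real^'n \<Rightarrow> real) \<Rightarrow> (real^'n) set \<Rightarrow> bool" where
  "has_lie_deriv_on V f g S \<longleftrightarrow>
     (\<forall>x\<in>S. \<forall>\<gamma> e. 0 < e \<and> \<gamma> 0 = x \<and>
        (\<forall>t\<in>{-e<..<e}. \<gamma> t \<in> S \<and> (\<gamma> has_vector_derivative V (\<gamma> t)) (at t))
        \<longrightarrow> ((f \<circ> \<gamma>) has_real_derivative g x) (at 0))"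

definition ldet :: "nat \<Rightarrow> (nat \<Rightarrow> nat \<Rightarrow> real) \<Rightarrow> real" where
  "ldet m A = (\<Sum>p | p permutes {..<m}. of_int (sign p) * (\<Prod>i<m. A i (p i)))"

definition Xmat :: "(nat \<Rightarrow> real^'n \<Rightarrow> real^'n) \<Rightarrow> real^'n \<Rightarrow> ('n \<Rightarrow> nat \<Rightarrow> real)" where
  "Xmat X x = (\<lambda>r j. X j x $ r)"

definition minor :: "('n::linorder \<Rightarrow> nat \<Rightarrow> real) \<Rightarrow> 'n set \<Rightarrow> nat set \<Rightarrow> real" where
  "minor M I J = ldet (card I)
     (\<lambda>a b. M (sorted_list_of_set I ! a) (sorted_list_of_set J ! b))"

text \<open>|det_{m x m} M| for an n x N matrix M: Euclidean norm of the vector of all m x m minors.\<close>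
definition minors_norm :: "nat \<Rightarrow> nat \<Rightarrow> ('n::{finite,linorder} \<Rightarrow> nat \<Rightarrow> real) \<Rightarrow> real" where
  "minors_norm m N M = sqrt (\<Sum>I\<in>{I::'n set. card I = m}.
      \<Sum>J\<in>{J. J \<subseteq> {..<N} \<and> card J = m}. (minor M I J)\<^sup>2)"

end

theory Submission imports Defs begin

text \<open>Differentiating the Leibniz formula, the derivative of the minor det X_{I,J} along X_j
replaces one column J_b at a time by (D X_{J_b}) X_j = (D X_j) X_{J_b} + \<Sum>_l c^l_{j,J_b} X_l.
The second summand is a combination of columns of X, so expanding by columns it yields
n1 x n1 minors of X with coefficients c.  The first summand is the matrix D X_j applied to
the columns of X; expanding the same derivative by rows instead, it yields determinants
whose rows are rows of X, with entries of D X_j as coefficients.  Every such determinant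
is 0 or a minor up to sign, so it is bounded by the norm of the vector of all minors.\<close>

lemma ldet_cong:
  assumes "\<And>a b. a < m \<Longrightarrow> b < m \<Longrightarrow> A a b = B a b"
  shows "ldet m A = ldet m B"
  unfolding ldet_def
proof (rule sum.cong[OF refl])
  fix p assume "p \<in> {p. p permutes {..<m}}"
  then have "\<And>i. i < m \<Longrightarrow> p i < m" by (auto dest: permutes_in_image)
  then show "of_int (sign p) * (\<Prod>i<m. A i (p i)) = of_int (sign p) * (\<Prod>i<m. B i (p i))"
    using assms by (auto intro!: prod.cong)
qed

lemma ldet_transpose: "ldet m (\<lambda>a b. A b a) = ldet m A"
proof -
  have "ldet m (\<lambda>a b. A b a) = (\<Sum>p | p permutes {..<m}. of_int (sign (inv p)) * (\<Prod>i<m. A (inv p i) i))"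
    unfolding ldet_def by (rule sum_permutations_inverse)
  also have "\<dots> = ldet m A"
    unfolding ldet_def
  proof (rule sum.cong[OF refl])
    fix p assume "p \<in> {p. p permutes {..<m}}"
    then have p: "p permutes {..<m}" by simp
    have "(\<Prod>i<m. A (inv p i) i) = prod ((\<lambda>i. A (inv p i) i) \<circ> p) {..<m}"
      by (rule prod.permute[OF p])
    also have "\<dots> = (\<Prod>i<m. A i (p i))"
      by (simp add: o_def permutes_inverses(2)[OF p])
    finally show "of_int (sign (inv p)) * (\<Prod>i<m. A (inv p i) i) = of_int (sign p) * (\<Prod>i<m. A i (p i))"
      using p by (simp add: sign_inverse[OF permutes_imp_permutation[OF _ p]])
  qed
  finally show ?thesis .
qed

lemma ldet_permute_rows:
  assumes s: "s permutes {..<m}"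
  shows "ldet m (\<lambda>a b. A (s a) b) = of_int (sign s) * ldet m A"
proof -
  have "ldet m (\<lambda>a b. A (s a) b)
      = (\<Sum>q | q permutes {..<m}. of_int (sign (q \<circ> s)) * (\<Prod>i<m. A (s i) ((q \<circ> s) i)))"
    unfolding ldet_def by (rule sum_permutations_compose_right[OF s])
  also have "\<dots> = (\<Sum>q | q permutes {..<m}. of_int (sign s) * (of_int (sign q) * (\<Prod>i<m. A i (q i))))"
  proof (rule sum.cong[OF refl])
    fix q assume "q \<in> {q. q permutes {..<m}}"
    then have q: "q permutes {..<m}" by simp
    have "(\<Prod>i<m. A (s i) ((q \<circ> s) i)) = prod ((\<lambda>i. A i (q i)) \<circ> s) {..<m}"
      by (simp add: o_def)
    also have "\<dots> = (\<Prod>i<m. A i (q i))" by (rule prod.permute[OF s, symmetric])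
    finally show "of_int (sign (q \<circ> s)) * (\<Prod>i<m. A (s i) ((q \<circ> s) i))
        = of_int (sign s) * (of_int (sign q) * (\<Prod>i<m. A i (q i)))"
      using sign_compose[OF permutes_imp_permutation[OF _ q] permutes_imp_permutation[OF _ s]]
      by simp
  qed
  also have "\<dots> = of_int (sign s) * ldet m A"
    unfolding ldet_def by (simp add: sum_distrib_left)
  finally show ?thesis .
qed

lemma ldet_permute_cols:
  assumes "s permutes {..<m}"
  shows "ldet m (\<lambda>a b. A a (s b)) = of_int (sign s) * ldet m A"
  using ldet_transpose[of m "\<lambda>a b. A b (s a)"] ldet_permute_rows[OF assms, of "\<lambda>a b. A b a"]
    ldet_transpose[of m A]
  by simp

lemma ldet_identical_rows:
  assumes "i < m" "k < m" "i \<noteq> k" "\<And>b. A i b = A k b"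
  shows "ldet m A = 0"
proof -
  have t: "Transposition.transpose i k permutes {..<m}"
    using assms by (simp add: permutes_swap_id)
  have "(\<lambda>a b. A (Transposition.transpose i k a) b) = A"
    using assms(4) by (auto simp: Transposition.transpose_def fun_eq_iff)
  with ldet_permute_rows[OF t, of A] have "ldet m A = - ldet m A"
    using assms(3) by (simp add: sign_swap_id)
  then show ?thesis by simp
qed

lemma ldet_identical_cols:
  assumes "i < m" "k < m" "i \<noteq> k" "\<And>a. A a i = A a k"
  shows "ldet m A = 0"
  using ldet_identical_rows[of i m k "\<lambda>a b. A b a"] ldet_transpose[of m A] assms by simp

lemma ldet_linear_row:
  assumes "i < m" "finite S"
  shows "ldet m (\<lambda>a b. if a = i then (\<Sum>s\<in>S. \<alpha> s * R s b) else A a b)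
       = (\<Sum>s\<in>S. \<alpha> s * ldet m (\<lambda>a b. if a = i then R s b else A a b))"
proof -
  have row_i: "(\<Prod>a<m. if a = i then r a else g a) = r i * (\<Prod>a\<in>{..<m}-{i}. g a)" for r g :: "nat \<Rightarrow> real"
    using assms(1) by (simp add: prod.remove)
  have "ldet m (\<lambda>a b. if a = i then (\<Sum>s\<in>S. \<alpha> s * R s b) else A a b)
      = (\<Sum>p | p permutes {..<m}. \<Sum>s\<in>S.
           \<alpha> s * (of_int (sign p) * (R s (p i) * (\<Prod>a\<in>{..<m}-{i}. A a (p a)))))"
    unfolding ldet_def row_i by (simp add: sum_distrib_left sum_distrib_right mult_ac)
  then show ?thesis
    unfolding ldet_def row_i by (subst (asm) sum.swap) (simp add: sum_distrib_left)
qed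

lemma ldet_linear_col:
  assumes "k < m" "finite S"
  shows "ldet m (\<lambda>a b. if b = k then (\<Sum>s\<in>S. \<alpha> s * R s a) else A a b)
       = (\<Sum>s\<in>S. \<alpha> s * ldet m (\<lambda>a b. if b = k then R s a else A a b))"
proof -
  have flip: "ldet m (\<lambda>a b. if b = k then F a else A a b) = ldet m (\<lambda>a b. if a = k then F b else A b a)"
    for F
    using ldet_transpose[of m "\<lambda>a b. if a = k then F b else A b a"] by simp
  show ?thesis
    unfolding flip using ldet_linear_row[OF assms, of \<alpha> R "\<lambda>a b. A b a"] by simp
qed

definition ldet_deriv :: "nat \<Rightarrow> (nat \<Rightarrow> nat \<Rightarrow> real) \<Rightarrow> (nat \<Rightarrow> nat \<Rightarrow> real) \<Rightarrow> real" where
  "ldet_deriv m M N = (\<Sum>p | p permutes {..<m}. of_int (sign p) *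
      (\<Sum>i<m. N i (p i) * (\<Prod>a\<in>{..<m}-{i}. M a (p a))))"

lemma has_derivative_ldet:
  fixes f :: "nat \<Rightarrow> nat \<Rightarrow> 'a::real_normed_vector \<Rightarrow> real"
  assumes "\<And>a b. a < m \<Longrightarrow> b < m \<Longrightarrow> (f a b has_derivative f' a b) (at x)"
  shows "((\<lambda>y. ldet m (\<lambda>a b. f a b y)) has_derivative
           (\<lambda>v. ldet_deriv m (\<lambda>a b. f a b x) (\<lambda>a b. f' a b v))) (at x)"
  unfolding ldet_def ldet_deriv_def
proof (intro has_derivative_sum has_derivative_mult_right has_derivative_prod)
  fix p i assume "p \<in> {p. p permutes {..<m}}" "i \<in> {..<m}"
  then show "(f i (p i) has_derivative f' i (p i)) (at x)"
    using assms by (auto dest: permutes_in_image)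
qed

lemma ldet_deriv_add: "ldet_deriv m M (\<lambda>a b. N a b + N' a b) = ldet_deriv m M N + ldet_deriv m M N'"
  unfolding ldet_deriv_def by (simp add: distrib_right distrib_left sum.distrib)

lemma ldet_deriv_rows: "ldet_deriv m M N = (\<Sum>i<m. ldet m (\<lambda>a b. if a = i then N a b else M a b))"
proof -
  have "(\<Prod>a<m. if a = i then N a (p a) else M a (p a)) = N i (p i) * (\<Prod>a\<in>{..<m}-{i}. M a (p a))"
    if "i < m" for i p
    using that by (simp add: prod.remove)
  then show ?thesis
    unfolding ldet_deriv_def ldet_def
    by (subst sum.swap) (simp add: sum_distrib_left)
qed

lemma ldet_deriv_cols: "ldet_deriv m M N = (\<Sum>k<m. ldet m (\<lambda>a b. if b = k then N a b else M a b))"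
proof -
  have "(\<Sum>i<m. N i (p i) * (\<Prod>a\<in>{..<m}-{i}. M a (p a)))
      = (\<Sum>k<m. \<Prod>a<m. if p a = k then N a (p a) else M a (p a))" if p: "p permutes {..<m}" for p
  proof -
    have "(\<Prod>a<m. if p a = p i then N a (p a) else M a (p a)) = N i (p i) * (\<Prod>a\<in>{..<m}-{i}. M a (p a))"
      if "i < m" for i
    proof -
      have "p a = p i \<longleftrightarrow> a = i" for a using permutes_inj[OF p] by (auto dest: injD)
      then show ?thesis using that by (simp add: prod.remove)
    qed
    then show ?thesis
      by (simp add: sum.permute[OF p, of "\<lambda>k. \<Prod>a<m. if p a = k then N a (p a) else M a (p a)"])
  qed
  then show ?thesis
    unfolding ldet_deriv_def ldet_def
    by (subst sum.swap) (simp add: sum_distrib_left)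
qed

lemma ldet_deriv_cong:
  assumes "\<And>a b. a < m \<Longrightarrow> b < m \<Longrightarrow> N a b = N' a b"
  shows "ldet_deriv m M N = ldet_deriv m M N'"
  unfolding ldet_deriv_rows using assms by (intro sum.cong refl ldet_cong) auto

lemma sorted_image_permutation:
  fixes \<rho> :: "nat \<Rightarrow> 'a::linorder"
  assumes "inj_on \<rho> {..<m}"
  obtains \<sigma> where "\<sigma> permutes {..<m}" "\<And>a. a < m \<Longrightarrow> sorted_list_of_set (\<rho> ` {..<m}) ! a = \<rho> (\<sigma> a)"
proof -
  let ?s = "sorted_list_of_set (\<rho> ` {..<m})"
  have "card (\<rho> ` {..<m}) = m" using assms by (simp add: card_image)
  then have nth: "bij_betw ((!) ?s) {..<m} (\<rho> ` {..<m})"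
    by (intro bij_betw_nth) auto
  have "bij_betw (inv_into {..<m} \<rho>) (\<rho> ` {..<m}) {..<m}"
    using assms by (simp add: bij_betw_inv_into inj_on_imp_bij_betw)
  define \<sigma> where "\<sigma> a = (if a < m then inv_into {..<m} \<rho> (?s ! a) else a)" for a
  have "bij_betw \<sigma> {..<m} {..<m}"
    using bij_betw_trans[OF nth \<open>bij_betw (inv_into {..<m} \<rho>) _ _\<close>]
    by (rule bij_betw_cong[THEN iffD1, rotated]) (simp add: \<sigma>_def)
  then have "\<sigma> permutes {..<m}"
    by (rule bij_imp_permutes) (simp add: \<sigma>_def)
  moreover have "?s ! a = \<rho> (\<sigma> a)" if "a < m" for a
    using bij_betw_apply[OF nth] that by (simp add: \<sigma>_def f_inv_into_f)
  ultimately show ?thesis using that by blast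
qed

lemma minors_norm_nonneg: "0 \<le> minors_norm m N M"
  unfolding minors_norm_def by (auto intro!: sum_nonneg)

lemma minor_le_minors_norm:
  fixes M :: "'n::{finite,linorder} \<Rightarrow> nat \<Rightarrow> real"
  assumes "card I = m" "J \<subseteq> {..<N}" "card J = m"
  shows "\<bar>minor M I J\<bar> \<le> minors_norm m N M"
proof -
  let ?\<J> = "{J. J \<subseteq> {..<N} \<and> card J = m}"
  have "finite ?\<J>" by (rule finite_subset[of _ "Pow {..<N}"]) auto
  then have "(minor M I J)\<^sup>2 \<le> (\<Sum>J\<in>?\<J>. (minor M I J)\<^sup>2)"
    using assms by (intro member_le_sum) auto
  also have "\<dots> \<le> (\<Sum>I\<in>{I::'n set. card I = m}. \<Sum>J\<in>?\<J>. (minor M I J)\<^sup>2)"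
    by (rule member_le_sum[where f="\<lambda>I. \<Sum>J\<in>?\<J>. (minor M I J)\<^sup>2"])
       (use assms in \<open>auto intro: sum_nonneg\<close>)
  finally have "sqrt ((minor M I J)\<^sup>2) \<le> minors_norm m N M"
    unfolding minors_norm_def by (rule real_sqrt_le_mono)
  then show ?thesis by simp
qed

text \<open>Any m x m submatrix, with rows and columns in arbitrary order and possibly repeated,
has determinant 0 or plus-minus a minor.\<close>
lemma ldet_submatrix_le_minors_norm:
  fixes M :: "'n::{finite,linorder} \<Rightarrow> nat \<Rightarrow> real"
  assumes "\<And>b. b < m \<Longrightarrow> \<kappa> b < N"
  shows "\<bar>ldet m (\<lambda>a b. M (\<rho> a) (\<kappa> b))\<bar> \<le> minors_norm m N M"
proof (cases "inj_on \<rho> {..<m} \<and> inj_on \<kappa> {..<m}")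
  case False
  then consider (rows) a a' where "a < m" "a' < m" "a \<noteq> a'" "\<rho> a = \<rho> a'"
    | (cols) b b' where "b < m" "b' < m" "b \<noteq> b'" "\<kappa> b = \<kappa> b'"
    unfolding inj_on_def by blast
  then have "ldet m (\<lambda>a b. M (\<rho> a) (\<kappa> b)) = 0"
  proof cases
    case rows
    then show ?thesis by (intro ldet_identical_rows[of a m a']) auto
  next
    case cols
    then show ?thesis by (intro ldet_identical_cols[of b m b']) auto
  qed
  then show ?thesis by (simp add: minors_norm_nonneg)
next
  case True
  obtain \<sigma> where \<sigma>: "\<sigma> permutes {..<m}" "\<And>a. a < m \<Longrightarrow> sorted_list_of_set (\<rho> ` {..<m}) ! a = \<rho> (\<sigma> a)"
    using sorted_image_permutation True by blast
  obtain \<tau> where \<tau>: "\<tau> permutes {..<m}" "\<And>b. b < m \<Longrightarrow> sorted_list_of_set (\<kappa> ` {..<m}) ! b = \<kappa> (\<tau> b)"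
    using sorted_image_permutation True by blast
  have card: "card (\<rho> ` {..<m}) = m" "card (\<kappa> ` {..<m}) = m"
    using True by (simp_all add: card_image)
  have "minor M (\<rho> ` {..<m}) (\<kappa> ` {..<m}) = ldet m (\<lambda>a b. M (\<rho> (\<sigma> a)) (\<kappa> (\<tau> b)))"
    unfolding minor_def card by (rule ldet_cong) (simp add: \<sigma> \<tau>)
  also have "\<dots> = of_int (sign \<sigma> * sign \<tau>) * ldet m (\<lambda>a b. M (\<rho> a) (\<kappa> b))"
    using ldet_permute_rows[OF \<sigma>(1), of "\<lambda>a b. M (\<rho> a) (\<kappa> (\<tau> b))"]
      ldet_permute_cols[OF \<tau>(1), of "\<lambda>a b. M (\<rho> a) (\<kappa> b)"]
    by simp
  finally have "\<bar>ldet m (\<lambda>a b. M (\<rho> a) (\<kappa> b))\<bar> = \<bar>minor M (\<rho> ` {..<m}) (\<kappa> ` {..<m})\<bar>"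
    by (simp add: abs_mult sign_def)
  also have "\<dots> \<le> minors_norm m N M"
    by (rule minor_le_minors_norm) (use card assms in auto)
  finally show ?thesis .
qed

lemma ldet_deriv_left_mult_le:
  fixes M :: "'n::{finite,linorder} \<Rightarrow> nat \<Rightarrow> real"
  assumes \<kappa>: "\<And>b. b < m \<Longrightarrow> \<kappa> b < N" and A: "\<And>a s. a < m \<Longrightarrow> \<bar>A a s\<bar> \<le> K"
  shows "\<bar>ldet_deriv m (\<lambda>a b. M (\<rho> a) (\<kappa> b)) (\<lambda>a b. \<Sum>s\<in>UNIV. A a s * M s (\<kappa> b))\<bar>
         \<le> m * (CARD('n) * (K * minors_norm m N M))"
  unfolding ldet_deriv_rows
proof (rule order_trans[OF sum_abs sum_bounded_above[of "{..<m}", unfolded card_lessThan]])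
  fix i assume i: "i \<in> {..<m}"
  have "ldet m (\<lambda>a b. if a = i then \<Sum>s\<in>UNIV. A a s * M s (\<kappa> b) else M (\<rho> a) (\<kappa> b))
      = ldet m (\<lambda>a b. if a = i then \<Sum>s\<in>UNIV. A i s * M s (\<kappa> b) else M (\<rho> a) (\<kappa> b))"
    by (rule arg_cong[where f="ldet m"]) (simp add: fun_eq_iff)
  also have "\<dots> = (\<Sum>s\<in>UNIV. A i s * ldet m (\<lambda>a b. M ((\<rho>(i := s)) a) (\<kappa> b)))"
    using i by (subst ldet_linear_row) (auto simp: if_distrib[of "\<lambda>r. M r _"] cong: if_cong)
  finally have row_i: "ldet m (\<lambda>a b. if a = i then \<Sum>s\<in>UNIV. A a s * M s (\<kappa> b) else M (\<rho> a) (\<kappa> b))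
      = (\<Sum>s\<in>UNIV. A i s * ldet m (\<lambda>a b. M ((\<rho>(i := s)) a) (\<kappa> b)))" .
  show "\<bar>ldet m (\<lambda>a b. if a = i then \<Sum>s\<in>UNIV. A a s * M s (\<kappa> b) else M (\<rho> a) (\<kappa> b))\<bar>
      \<le> CARD('n) * (K * minors_norm m N M)"
    unfolding row_i
  proof (rule order_trans[OF sum_abs sum_bounded_above])
    fix s :: 'n
    show "\<bar>A i s * ldet m (\<lambda>a b. M ((\<rho>(i := s)) a) (\<kappa> b))\<bar> \<le> K * minors_norm m N M"
      unfolding abs_mult using A[of i s] i
      by (intro mult_mono ldet_submatrix_le_minors_norm \<kappa>) auto
  qed
qed

lemma ldet_deriv_right_mult_le:
  fixes M :: "'n::{finite,linorder} \<Rightarrow> nat \<Rightarrow> real"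
  assumes \<kappa>: "\<And>b. b < m \<Longrightarrow> \<kappa> b < N" and B: "\<And>l b. l < N \<Longrightarrow> b < m \<Longrightarrow> \<bar>B l b\<bar> \<le> K"
  shows "\<bar>ldet_deriv m (\<lambda>a b. M (\<rho> a) (\<kappa> b)) (\<lambda>a b. \<Sum>l<N. M (\<rho> a) l * B l b)\<bar>
         \<le> m * (N * (K * minors_norm m N M))"
  unfolding ldet_deriv_cols
proof (rule order_trans[OF sum_abs sum_bounded_above[of "{..<m}", unfolded card_lessThan]])
  fix k assume k: "k \<in> {..<m}"
  have "ldet m (\<lambda>a b. if b = k then \<Sum>l<N. M (\<rho> a) l * B l b else M (\<rho> a) (\<kappa> b))
      = ldet m (\<lambda>a b. if b = k then \<Sum>l<N. B l k * M (\<rho> a) l else M (\<rho> a) (\<kappa> b))"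
    by (rule arg_cong[where f="ldet m"]) (simp add: fun_eq_iff mult.commute)
  also have "\<dots> = (\<Sum>l<N. B l k * ldet m (\<lambda>a b. M (\<rho> a) ((\<kappa>(k := l)) b)))"
    using k by (subst ldet_linear_col) (auto simp: if_distrib[of "\<lambda>c. M _ c"] cong: if_cong)
  finally have col_k: "ldet m (\<lambda>a b. if b = k then \<Sum>l<N. M (\<rho> a) l * B l b else M (\<rho> a) (\<kappa> b))
      = (\<Sum>l<N. B l k * ldet m (\<lambda>a b. M (\<rho> a) ((\<kappa>(k := l)) b)))" .
  show "\<bar>ldet m (\<lambda>a b. if b = k then \<Sum>l<N. M (\<rho> a) l * B l b else M (\<rho> a) (\<kappa> b))\<bar>
      \<le> N * (K * minors_norm m N M)"
    unfolding col_k
  proof (rule order_trans[OF sum_abs sum_bounded_above[of "{..<N}", unfolded card_lessThan]])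
    fix l assume l: "l \<in> {..<N}"
    show "\<bar>B l k * ldet m (\<lambda>a b. M (\<rho> a) ((\<kappa>(k := l)) b))\<bar> \<le> K * minors_norm m N M"
      unfolding abs_mult using B[of l k] k l
      by (intro mult_mono ldet_submatrix_le_minors_norm) (auto simp: \<kappa>)
  qed
qed

lemma has_derivative_minor:
  fixes I :: "'n::{finite,linorder} set"
  assumes X: "\<And>i. i < N \<Longrightarrow> (X i has_derivative X' i) (at x)"
    and J: "J \<subseteq> {..<N}" "card J = card I"
  shows "((\<lambda>y. minor (Xmat X y) I J) has_derivative
          (\<lambda>v. ldet_deriv (card I)
             (\<lambda>a b. Xmat X x (sorted_list_of_set I ! a) (sorted_list_of_set J ! b))
             (\<lambda>a b. X' (sorted_list_of_set J ! b) v $ sorted_list_of_set I ! a))) (at x)"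
  unfolding minor_def Xmat_def
proof (rule has_derivative_ldet)
  fix a b assume "b < card I"
  moreover have "finite J" using J(1) finite_subset by blast
  ultimately have "sorted_list_of_set J ! b \<in> J"
    using J(2) by (metis nth_mem length_sorted_list_of_set set_sorted_list_of_set)
  then show "((\<lambda>y. X (sorted_list_of_set J ! b) y $ sorted_list_of_set I ! a) has_derivative
      (\<lambda>v. X' (sorted_list_of_set J ! b) v $ sorted_list_of_set I ! a)) (at x)"
    using J by (intro bounded_linear.has_derivative[OF bounded_linear_vec_nth] X) auto
qed

lemma blinfun_apply_vec_component:
  fixes f :: "(real^'n) \<Rightarrow>\<^sub>L (real^'m)"
  shows "f v $ r = (\<Sum>s\<in>UNIV. (f (axis s 1) $ r) * v $ s)"
proof -
  have "f v = f (\<Sum>s\<in>UNIV. (v $ s) *\<^sub>R axis s 1)"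
    using basis_expansion[of v] by (simp add: scalar_mult_eq_scaleR)
  then show ?thesis
    by (simp add: blinfun.sum_right blinfun.scaleR_right mult.commute)
qed

lemma minor_deriv_along_field_le:
  fixes I :: "'n::{finite,linorder} set"
  assumes X: "\<And>i. i < N \<Longrightarrow> (X i has_derivative blinfun_apply (DX i)) (at x)"
    and bracket: "\<And>k. k < N \<Longrightarrow> DX k (X j x) - DX j (X k x) = (\<Sum>l<N. c l k *\<^sub>R X l x)"
    and DX_le: "norm (DX j) \<le> K" and c_le: "\<And>l k. l < N \<Longrightarrow> k < N \<Longrightarrow> \<bar>c l k\<bar> \<le> K"
    and J: "J \<subseteq> {..<N}" "card J = card I"
  shows "\<exists>L. ((\<lambda>y. minor (Xmat X y) I J) has_derivative L) (at x) \<and>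
           \<bar>L (X j x)\<bar> \<le> real (card I * (CARD('n) + N)) * K * minors_norm (card I) N (Xmat X x)"
proof -
  define m where "m = card I"
  define sI where "sI = sorted_list_of_set I"
  define sJ where "sJ = sorted_list_of_set J"
  define A where "A a s = DX j (axis s 1) $ (sI ! a)" for a s
  define B where "B l b = c l (sJ ! b)" for l b
  have sJ: "sJ ! b < N" if "b < m" for b
  proof -
    have "finite J" using J(1) finite_subset by blast
    with that J have "sJ ! b \<in> J"
      by (metis m_def sJ_def nth_mem length_sorted_list_of_set set_sorted_list_of_set)
    with J(1) show ?thesis by auto
  qed
  have A_le: "\<bar>A a s\<bar> \<le> K" for a s
  proof -
    have "\<bar>A a s\<bar> \<le> norm (DX j (axis s 1))" unfolding A_def by (rule component_le_norm_cart)
    also have "\<dots> \<le> norm (DX j) * norm (axis s (1::real))" by (rule norm_blinfun)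
    finally show ?thesis using DX_le by simp
  qed
  have entry: "DX (sJ ! b) (X j x) $ (sI ! a)
      = (\<Sum>s\<in>UNIV. A a s * Xmat X x s (sJ ! b)) + (\<Sum>l<N. Xmat X x (sI ! a) l * B l b)"
    if "b < m" for a b
  proof -
    have "DX (sJ ! b) (X j x) = DX j (X (sJ ! b) x) + (\<Sum>l<N. c l (sJ ! b) *\<^sub>R X l x)"
      using bracket[OF sJ[OF that]] by (simp add: algebra_simps)
    then show ?thesis
      using blinfun_apply_vec_component[of "DX j" "X (sJ ! b) x" "sI ! a"]
      by (simp add: A_def B_def Xmat_def mult.commute)
  qed
  let ?M = "\<lambda>a b. Xmat X x (sI ! a) (sJ ! b)"
  define L where "L v = ldet_deriv m ?M (\<lambda>a b. DX (sJ ! b) v $ (sI ! a))" for v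
  have "((\<lambda>y. minor (Xmat X y) I J) has_derivative L) (at x)"
    unfolding L_def m_def sI_def sJ_def using X J by (rule has_derivative_minor)
  moreover have "L (X j x) = ldet_deriv m ?M (\<lambda>a b. \<Sum>s\<in>UNIV. A a s * Xmat X x s (sJ ! b))
      + ldet_deriv m ?M (\<lambda>a b. \<Sum>l<N. Xmat X x (sI ! a) l * B l b)"
    unfolding L_def ldet_deriv_add[symmetric] by (rule ldet_deriv_cong) (simp add: entry)
  moreover have "\<bar>ldet_deriv m ?M (\<lambda>a b. \<Sum>s\<in>UNIV. A a s * Xmat X x s (sJ ! b))\<bar>
      \<le> m * (CARD('n) * (K * minors_norm m N (Xmat X x)))"
    by (rule ldet_deriv_left_mult_le) (auto simp: sJ A_le)
  moreover have "\<bar>ldet_deriv m ?M (\<lambda>a b. \<Sum>l<N. Xmat X x (sI ! a) l * B l b)\<bar>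
      \<le> m * (N * (K * minors_norm m N (Xmat X x)))"
    by (rule ldet_deriv_right_mult_le) (auto simp: sJ B_def c_le)
  ultimately show ?thesis
    unfolding m_def by (intro exI[of _ L]) (auto simp: algebra_simps)
qed

theorem lemma3p6:
  fixes \<delta>0 D \<xi>0 K :: real
  assumes "0 < \<delta>0" and "0 < \<xi>0"
  shows "\<exists>C. \<forall>(\<Omega> :: (real^'n::{finite,linorder}) set) X DX d n0 \<xi> x0 c c1 c2 n1 j I J x.
    open \<Omega> \<and> connected \<Omega> \<and>
    (\<forall>i<n0. \<forall>y\<in>\<Omega>. (X i has_derivative blinfun_apply (DX i y)) (at y)) \<and>
    (\<forall>i<n0. continuous_on \<Omega> (DX i)) \<and>
    (\<forall>i<n0. \<delta>0 \<le> d i \<and> d i \<le> D) \<and>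
    \<xi>0 \<le> \<xi> \<and> \<xi> \<le> 1 \<and> x0 \<in> \<Omega> \<and>
    cond_C \<Omega> X d n0 x0 \<xi> \<and>
    (\<forall>i<n0. \<forall>k<n0. \<forall>y\<in>cc_ball \<Omega> X d n0 x0 \<xi>.
        DX k y (X i y) - DX i y (X k y) = (\<Sum>l<n0. c l i k y *\<^sub>R X l y)) \<and>
    inj_on (\<lambda>i. X i x0) {..<n0} \<and> independent ((\<lambda>i. X i x0) ` {..<n0}) \<and>
    (\<forall>i<n0. \<forall>y\<in>cc_ball \<Omega> X d n0 x0 \<xi>. norm (X i y) \<le> K \<and> norm (DX i y) \<le> K) \<and>
    (\<forall>l<n0. \<forall>i<n0. \<forall>k<n0.
       continuous_on (cc_ball \<Omega> X d n0 x0 \<xi>) (c l i k) \<and>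
       (\<forall>y\<in>cc_ball \<Omega> X d n0 x0 \<xi>. \<bar>c l i k y\<bar> \<le> K) \<and>
       (\<forall>p<n0. has_lie_deriv_on (X p) (c l i k) (c1 l i k p) (cc_ball \<Omega> X d n0 x0 \<xi>) \<and>
          continuous_on (cc_ball \<Omega> X d n0 x0 \<xi>) (c1 l i k p) \<and>
          (\<forall>y\<in>cc_ball \<Omega> X d n0 x0 \<xi>. \<bar>c1 l i k p y\<bar> \<le> K) \<and>
          (\<forall>q<n0. has_lie_deriv_on (X q) (c1 l i k p) (c2 l i k p q) (cc_ball \<Omega> X d n0 x0 \<xi>) \<and>
             continuous_on (cc_ball \<Omega> X d n0 x0 \<xi>) (c2 l i k p q) \<and>
             (\<forall>y\<in>cc_ball \<Omega> X d n0 x0 \<xi>. \<bar>c2 l i k p q y\<bar> \<le> K)))) \<and>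
    1 \<le> n1 \<and> n1 \<le> n0 \<and> j < n0 \<and>
    card I = n1 \<and> J \<subseteq> {..<n0} \<and> card J = n1 \<and>
    x \<in> cc_ball \<Omega> X d n0 x0 \<xi>
    \<longrightarrow> (\<exists>L. ((\<lambda>y. minor (Xmat X y) I J) has_derivative L) (at x) \<and>
           \<bar>L (X j x)\<bar> \<le> C * minors_norm n1 n0 (Xmat X x))"
  apply (rule exI[of _ "2 * real CARD('n) ^ 2 * \<bar>K\<bar>"])
  apply (intro allI impI, elim conjE)
  subgoal premises H for \<Omega> X DX d n0 \<xi> x0 c c1 c2 n1 j I J x
  proof -
    from H(21) obtain \<gamma> a where "x = \<gamma> 1" "control_path \<Omega> X d n0 x0 \<xi> a \<gamma>"
      unfolding cc_ball_def by blast
    then have "x \<in> \<Omega>" unfolding control_path_def by auto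
    then have "\<And>i. i < n0 \<Longrightarrow> (X i has_derivative blinfun_apply (DX i x)) (at x)"
      using H(3) by blast
    moreover have "\<And>k. k < n0 \<Longrightarrow> DX k x (X j x) - DX j x (X k x) = (\<Sum>l<n0. c l j k x *\<^sub>R X l x)"
      using H(10,17,21) by blast
    moreover have DX_le: "norm (DX j x) \<le> K"
      using H(13,17,21) by blast
    moreover have "\<And>l k. l < n0 \<Longrightarrow> k < n0 \<Longrightarrow> \<bar>c l j k x\<bar> \<le> K"
      using H(14,17,21) by blast
    ultimately obtain L where L: "((\<lambda>y. minor (Xmat X y) I J) has_derivative L) (at x)"
        "\<bar>L (X j x)\<bar> \<le> real (n1 * (CARD('n) + n0)) * K * minors_norm n1 n0 (Xmat X x)"
      using minor_deriv_along_field_le[of n0 X "\<lambda>i. DX i x" x j "\<lambda>l k. c l j k x" K J I] H(18-20)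
      by auto
    have "n0 \<le> CARD('n)"
      using independent_bound[OF H(12)] card_image[OF H(11)] by simp
    then have "n1 * (CARD('n) + n0) \<le> 2 * CARD('n) ^ 2"
      using mult_le_mono[of n1 "CARD('n)" "CARD('n) + n0" "CARD('n) + CARD('n)"] H(16)
      by (simp add: power2_eq_square distrib_left mult_2)
    then have "real (n1 * (CARD('n) + n0)) \<le> 2 * real CARD('n) ^ 2"
      by (metis of_nat_le_iff of_nat_mult of_nat_numeral of_nat_power)
    moreover have "0 \<le> K"
      using DX_le norm_ge_zero order_trans by blast
    ultimately have "real (n1 * (CARD('n) + n0)) * K \<le> 2 * real CARD('n) ^ 2 * \<bar>K\<bar>"
      using mult_right_mono by force
    then have "\<bar>L (X j x)\<bar> \<le> 2 * real CARD('n) ^ 2 * \<bar>K\<bar> * minors_norm n1 n0 (Xmat X x)"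
      using order_trans[OF L(2) mult_right_mono[OF _ minors_norm_nonneg]] by blast
    with L(1) show ?thesis by blast
  qed
  done

end
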